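(* Let $(\mathbb{X},\oplus,\otimes,\mathbb{0},\mathbb{1})$ be a linearly ordered, algebraically complete idempotent semifield, and let $\bm{A}_1,\ldots,\bm{A}_m\in\mathbb{X}^{n\times n}$ be matrices such that $\bm{B}=\bm{A}_{1}\oplus\bm{A}_{1}^{-}\oplus\cdots\oplus\bm{A}_{m}\oplus\bm{A}_{m}^{-}$ has no zero entries. Let $\mu$ be the spectral radius of $\bm{B}$ and $\bm{B}_{\mu}=\mu^{-1}\bm{B}$. Consider the problem of minimizing $\max_{1\le i\le m} d(\bm{A}_i,\bm{x}\bm{x}^{-})$ (maximum with respect to the order of $\mathbb{X}$, i.e. $\bigoplus_{i=1}^m d(\bm{A}_i,\bm{x}\bm{x}^{-})$) over all regular vectors $\bm{x}\in\mathbb{X}^n$. Then the minimum value equals $\mu$, and the set of all solutions is $\{\bm{x}=\bm{B}_{\mu}^{\ast}\bm{u}:\bm{u}\in\mathbb{X}^n,\ \bm{u}\ne\bm{0}\}$.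
   Context: An idempotent semifield is a set $\mathbb{X}$ with associative, commutative operations $\oplus$ (addition) and $\otimes$ (multiplication, usually omitted in writing) with neutral elements $\mathbb{0}$ and $\mathbb{1}$, multiplication distributing over addition, idempotent addition ($x\oplus x=x$), and every nonzero $x$ having an inverse $x^{-1}$ with $xx^{-1}=\mathbb{1}$. It is assumed linearly ordered by the order $x\le y \iff x\oplus y=y$, and algebraically complete: $x^p=a$ is solvable for every $a$ and integer $p>0$, so rational powers are defined. Matrix and vector operations use the usual formulas with $\oplus,\otimes$ in place of $+,\times$; $\bm{0}$ is the zero vector; a vector is regular if it has no zero entries. For a nonzero column vector $\bm{x}=(x_i)$, $\bm{x}^{-}$ is the row vector with entries $x_i^{-1}$ if $x_i\ne\mathbb{0}$ and $\mathbb{0}$ otherwise. For a nonzero matrix $\bm{A}=(a_{ij})$, $\bm{A}^{-}=(a^{-}_{ij})$ with $a^{-}_{ij}=a_{ji}^{-1}$ if $a_{ji}\neq\mathbb{0}$ and $\mathbb{0}$ otherwise. The trace is $\mathrm{tr}\,\bm{A}=a_{11}\oplus\cdots\oplus a_{nn}$. The distance between square matrices is $d(\bm{A},\bm{B})=\mathrm{tr}(\bm{B}^{-}\bm{A})\oplus\mathrm{tr}(\bm{A}^{-}\bm{B})$. $\bm{I}$ is the identity matrix, $\bm{A}^0=\bm{I}$, $\bm{A}^p=\bm{A}^{p-1}\bm{A}$. The spectral radius of $\bm{A}$ of order $n$ is $\lambda=\bigoplus_{k=1}^{n}\bigoplus_{1\le i_1,\ldots,i_k\le n}(a_{i_1i_2}a_{i_2i_3}\cdots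 a_{i_ki_1})^{1/k}$. For a square matrix $\bm{M}$ of order $n$, $\bm{M}^{\ast}=\bm{I}\oplus\bm{M}\oplus\cdots\oplus\bm{M}^{n-1}$. *)

theory Defs
  imports Main
begin

text \<open>Addition \<oplus> is rendered by +, multiplication \<otimes> by *, \<zero> by 0, \<one> by 1.
  The convention inverse 0 = 0 is only a totalisation; inverses are only used on nonzero
  elements below.\<close>

class lin_idem_semifield = comm_semiring_1 + linorder + inverse +
  assumes add_idem: "x + x = x"
  and le_iff_add: "x \<le> y \<longleftrightarrow> x + y = y"
  and right_inverse: "x \<noteq> 0 \<Longrightarrow> x * inverse x = 1"
  and inverse_zero_conv: "inverse 0 = 0"
  and alg_complete: "0 < p \<Longrightarrow> \<exists>x. x ^ p = a"

definition root :: "nat \<Rightarrow> 'a::lin_idem_semifield \<Rightarrow> 'a" where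
  "root k a = (THE y. y ^ k = a)"

definition mmult :: "('n::finite \<Rightarrow> 'n \<Rightarrow> 'a::lin_idem_semifield) \<Rightarrow> ('n \<Rightarrow> 'n \<Rightarrow> 'a) \<Rightarrow> 'n \<Rightarrow> 'n \<Rightarrow> 'a" where
  "mmult A B i j = (\<Sum>k\<in>UNIV. A i k * B k j)"

definition mvmult :: "('n::finite \<Rightarrow> 'n \<Rightarrow> 'a::lin_idem_semifield) \<Rightarrow> ('n \<Rightarrow> 'a) \<Rightarrow> 'n \<Rightarrow> 'a" where
  "mvmult A x i = (\<Sum>j\<in>UNIV. A i j * x j)"

definition smult :: "'a::lin_idem_semifield \<Rightarrow> ('n \<Rightarrow> 'n \<Rightarrow> 'a) \<Rightarrow> 'n \<Rightarrow> 'n \<Rightarrow> 'a" where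
  "smult c A i j = c * A i j"

definition idm :: "'n \<Rightarrow> 'n \<Rightarrow> 'a::lin_idem_semifield" where
  "idm i j = (if i = j then 1 else 0)"

primrec mpow :: "('n::finite \<Rightarrow> 'n \<Rightarrow> 'a::lin_idem_semifield) \<Rightarrow> nat \<Rightarrow> 'n \<Rightarrow> 'n \<Rightarrow> 'a" where
  "mpow A 0 = idm"
| "mpow A (Suc p) = mmult (mpow A p) A"

definition mstar :: "('n::finite \<Rightarrow> 'n \<Rightarrow> 'a::lin_idem_semifield) \<Rightarrow> 'n \<Rightarrow> 'n \<Rightarrow> 'a" where
  "mstar M i j = (\<Sum>k<card (UNIV :: 'n set). mpow M k i j)"

definition pinv_vec :: "('n \<Rightarrow> 'a::lin_idem_semifield) \<Rightarrow> 'n \<Rightarrow> 'a" where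
  "pinv_vec x i = (if x i = 0 then 0 else inverse (x i))"

definition pinv_mat :: "('n \<Rightarrow> 'n \<Rightarrow> 'a::lin_idem_semifield) \<Rightarrow> 'n \<Rightarrow> 'n \<Rightarrow> 'a" where
  "pinv_mat A i j = (if A j i = 0 then 0 else inverse (A j i))"

definition outer :: "('n \<Rightarrow> 'a::lin_idem_semifield) \<Rightarrow> 'n \<Rightarrow> 'n \<Rightarrow> 'a" where
  "outer x i j = x i * pinv_vec x j"

definition mtrace :: "('n::finite \<Rightarrow> 'n \<Rightarrow> 'a::lin_idem_semifield) \<Rightarrow> 'a" where
  "mtrace A = (\<Sum>i\<in>UNIV. A i i)"

definition mdist :: "('n::finite \<Rightarrow> 'n \<Rightarrow> 'a::lin_idem_semifield) \<Rightarrow> ('n \<Rightarrow> 'n \<Rightarrow> 'a) \<Rightarrow> 'a" where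
  "mdist A B = mtrace (mmult (pinv_mat B) A) + mtrace (mmult (pinv_mat A) B)"

definition regular :: "('n \<Rightarrow> 'a::lin_idem_semifield) \<Rightarrow> bool" where
  "regular x \<longleftrightarrow> (\<forall>i. x i \<noteq> 0)"

definition cyc_weight :: "('n \<Rightarrow> 'n \<Rightarrow> 'a::lin_idem_semifield) \<Rightarrow> 'n list \<Rightarrow> 'a" where
  "cyc_weight A is = (\<Prod>t<length is. A (is ! t) (is ! ((t + 1) mod length is)))"

definition sprad :: "('n::finite \<Rightarrow> 'n \<Rightarrow> 'a::lin_idem_semifield) \<Rightarrow> 'a" where
  "sprad A = (\<Sum>k\<in>{1..card (UNIV :: 'n set)}. \<Sum>is\<in>{is. length is = k}. root k (cyc_weight A is))"

end

theory Submission
  imports Defs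
begin

text \<open>For regular \<open>x\<close> the objective equals \<open>x\<^sup>- B x\<close>, the sum of all entries of the
  rescaled matrix \<open>X\<^sup>-\<^sup>1 B X\<close> with \<open>X = diag x\<close>. Rescaling leaves cycle weights unchanged,
  and a cycle of length \<open>k\<close> of this matrix weighs at most \<open>(x\<^sup>- B x)\<^sup>k\<close>; hence
  \<open>\<mu> \<le> x\<^sup>- B x\<close>, with equality exactly when \<open>B\<^sub>\<mu> x \<le> x\<close>. Since \<open>B\<^sub>\<mu>\<close> has spectral
  radius \<open>1\<close>, none of its cycles weighs more than \<open>1\<close>, so cutting cycles out of walks shows that
  \<open>B\<^sub>\<mu>\<^sup>*\<close> dominates every power of \<open>B\<^sub>\<mu>\<close>. Consequently every \<open>B\<^sub>\<mu>\<^sup>* u\<close> satisfies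
  \<open>B\<^sub>\<mu> x \<le> x\<close>, every solution of \<open>B\<^sub>\<mu> x \<le> x\<close> is fixed by \<open>B\<^sub>\<mu>\<^sup>*\<close>, and, \<open>B\<close> having
  no zero entries, the vectors \<open>B\<^sub>\<mu>\<^sup>* u\<close> with \<open>u \<noteq> 0\<close> are regular.\<close>

section \<open>Arithmetic of idempotent semifields\<close>

context lin_idem_semifield
begin

lemma add_eq_max: "a + b = max a b"
proof (cases "a \<le> b")
  case True
  thus ?thesis by (simp add: le_iff_add max_def)
next
  case False
  hence "b + a = a" by (simp add: le_iff_add [symmetric])
  thus ?thesis using False by (simp add: max_def add.commute)
qed

lemma zero_le [simp]: "0 \<le> x"
  by (simp add: le_iff_add)

subclass ordered_comm_semiring
proof
  fix a b c :: 'a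
  show "a \<le> b \<Longrightarrow> c + a \<le> c + b"
    by (auto simp: add_eq_max max_def)
  show "a \<le> b \<Longrightarrow> 0 \<le> c \<Longrightarrow> c * a \<le> c * b"
    by (simp add: le_iff_add distrib_left [symmetric])
qed

subclass ordered_semiring_1
  by standard (simp add: order.strict_iff_order)

subclass semiring_no_zero_divisors
proof
  fix a b :: 'a
  assume "a \<noteq> 0" "b \<noteq> 0"
  have "b = (a * inverse a) * b" using \<open>a \<noteq> 0\<close> right_inverse by simp
  also have "\<dots> = inverse a * (a * b)" by (simp add: ac_simps)
  finally show "a * b \<noteq> 0" using \<open>b \<noteq> 0\<close> by (metis mult_zero_right)
qed

subclass semiring_1_no_zero_divisors ..

lemma sum_le_iff: "finite S \<Longrightarrow> sum f S \<le> c \<longleftrightarrow> (\<forall>x\<in>S. f x \<le> c)"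
  by (induction S rule: finite_induct) (auto simp: add_eq_max)

lemma inverse_mult_self: "a \<noteq> 0 \<Longrightarrow> inverse a * a = 1"
  using right_inverse by (simp add: mult.commute)

lemma inverse_nonzero: "a \<noteq> 0 \<Longrightarrow> inverse a \<noteq> 0"
  by (metis right_inverse mult_zero_right zero_neq_one)

lemma inverse_eqI: "a * b = 1 \<Longrightarrow> inverse a = b"
  by (metis inverse_mult_self mult.assoc mult_1_left mult_1_right mult_zero_left zero_neq_one)

lemma le_inverse_mult_iff: "b \<noteq> 0 \<Longrightarrow> a \<le> inverse b * c \<longleftrightarrow> b * a \<le> c"
  by (metis inverse_mult_self right_inverse mult.assoc mult_1_left mult_left_mono zero_le)

lemma inverse_mult_le_iff: "b \<noteq> 0 \<Longrightarrow> inverse b * a \<le> c \<longleftrightarrow> a \<le> b * c"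
  by (metis inverse_mult_self right_inverse mult.assoc mult_1_left mult_left_mono zero_le)

lemma mult_strict_left_mono_nonzero: "a < b \<Longrightarrow> c \<noteq> 0 \<Longrightarrow> c * a < c * b"
  using le_inverse_mult_iff [of c b "c * a"] inverse_mult_self [of c]
  by (simp add: mult.assoc [symmetric] not_le [symmetric])

lemma power_strict_mono_exp_pos:
  assumes "a < b"
  shows "0 < k \<Longrightarrow> a ^ k < b ^ k"
proof (induction k rule: nat_induct_non_zero)
  case (Suc k)
  have "a ^ Suc k \<le> b * a ^ k" using assms by (simp add: mult_right_mono)
  also have "\<dots> < b * b ^ k"
    using le_less_trans [OF zero_le assms] Suc.IH by (intro mult_strict_left_mono_nonzero) auto
  finally show ?case by simp
qed (use assms in simp)

lemma inverse_power_nonzero: "a \<noteq> 0 \<Longrightarrow> inverse (a ^ k) = inverse a ^ k"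
  by (rule inverse_eqI) (simp add: power_mult_distrib [symmetric] right_inverse)

lemma power_le_power_iff: "0 < k \<Longrightarrow> a ^ k \<le> b ^ k \<longleftrightarrow> a \<le> b"
  using power_mono [of a b k] power_strict_mono_exp_pos [of b a k] by (auto simp: not_le [symmetric])

lemma power_eq_power_iff: "0 < k \<Longrightarrow> a ^ k = b ^ k \<longleftrightarrow> a = b"
  by (metis power_le_power_iff order.eq_iff)

end

section \<open>Roots and the spectral radius\<close>

lemma power_root:
  fixes a :: "'a::lin_idem_semifield"
  assumes "0 < k"
  shows "root k a ^ k = a"
proof -
  obtain y where y: "y ^ k = a" using alg_complete [OF assms] by blast
  have "root k a = y"
    unfolding root_def using y power_eq_power_iff [OF assms] by (intro the_equality) auto
  thus ?thesis using y by simp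
qed

lemma root_le_iff:
  fixes a :: "'a::lin_idem_semifield"
  assumes "0 < k"
  shows "root k a \<le> b \<longleftrightarrow> a \<le> b ^ k"
  using power_le_power_iff [OF assms, of "root k a" b] by (simp add: power_root [OF assms])

lemma sprad_le_iff:
  fixes M :: "'n::finite \<Rightarrow> 'n \<Rightarrow> 'a::lin_idem_semifield"
  shows "sprad M \<le> c \<longleftrightarrow>
    (\<forall>is::'n list. is \<noteq> [] \<longrightarrow> length is \<le> card (UNIV :: 'n set) \<longrightarrow> cyc_weight M is \<le> c ^ length is)"
proof -
  have "finite {is :: 'n list. length is = k}" for k
    using finite_lists_length_eq [OF finite_UNIV, of k] by simp
  hence "sprad M \<le> c \<longleftrightarrow>
      (\<forall>k\<in>{1..card (UNIV :: 'n set)}. \<forall>is\<in>{is. length is = k}. root k (cyc_weight M is) \<le> c)"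
    unfolding sprad_def by (simp add: sum_le_iff)
  also have "\<dots> \<longleftrightarrow> (\<forall>k\<in>{1..card (UNIV :: 'n set)}. \<forall>is\<in>{is. length is = k}. cyc_weight M is \<le> c ^ k)"
    by (simp add: root_le_iff)
  also have "\<dots> \<longleftrightarrow>
      (\<forall>is::'n list. is \<noteq> [] \<longrightarrow> length is \<le> card (UNIV :: 'n set) \<longrightarrow> cyc_weight M is \<le> c ^ length is)"
    by (auto simp: Suc_le_eq)
  finally show ?thesis .
qed

lemma cyc_weight_le_sprad_power:
  fixes M :: "'n::finite \<Rightarrow> 'n \<Rightarrow> 'a::lin_idem_semifield"
  shows "is \<noteq> [] \<Longrightarrow> length is \<le> card (UNIV :: 'n set) \<Longrightarrow> cyc_weight M is \<le> sprad M ^ length is"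
  using sprad_le_iff [of M "sprad M"] by simp

lemma cyc_weight_smult: "cyc_weight (smult c M) is = c ^ length is * cyc_weight M is"
  by (simp add: cyc_weight_def smult_def prod.distrib)

lemma sprad_smult:
  fixes M :: "'n::finite \<Rightarrow> 'n \<Rightarrow> 'a::lin_idem_semifield"
  assumes "c \<noteq> 0"
  shows "sprad (smult c M) = c * sprad M"
proof -
  have "c ^ k * w \<le> d ^ k \<longleftrightarrow> w \<le> (inverse c * d) ^ k" for k and w d :: 'a
    using assms by (simp add: le_inverse_mult_iff [symmetric] power_mult_distrib inverse_power_nonzero)
  hence "sprad (smult c M) \<le> d \<longleftrightarrow> c * sprad M \<le> d" for d
    using assms by (simp add: sprad_le_iff cyc_weight_smult le_inverse_mult_iff [symmetric])
  thus ?thesis by (metis order.refl order.antisym)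
qed

lemma sprad_normalize:
  fixes M :: "'n::finite \<Rightarrow> 'n \<Rightarrow> 'a::lin_idem_semifield"
  assumes "sprad M \<noteq> 0"
  shows "sprad (smult (inverse (sprad M)) M) = 1"
  using sprad_smult [OF inverse_nonzero [OF assms], of M] inverse_mult_self [OF assms] by simp

lemma sprad_nonzero:
  fixes M :: "'n::finite \<Rightarrow> 'n \<Rightarrow> 'a::lin_idem_semifield"
  assumes "M i i \<noteq> 0"
  shows "sprad M \<noteq> 0"
proof -
  have "cyc_weight M [i] \<le> sprad M ^ 1"
    using cyc_weight_le_sprad_power [of "[i]" M] by (simp add: Suc_le_eq finite_UNIV_card_ge_0)
  thus ?thesis using assms by (auto simp: cyc_weight_def order.antisym)
qed

section \<open>Walks, matrix powers and the Kleene star\<close>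

definition path_weight :: "('n \<Rightarrow> 'n \<Rightarrow> 'a::lin_idem_semifield) \<Rightarrow> nat \<Rightarrow> (nat \<Rightarrow> 'n) \<Rightarrow> 'a" where
  "path_weight M k p = (\<Prod>t<k. M (p t) (p (Suc t)))"

lemma path_weight_Suc: "path_weight M (Suc k) p = path_weight M k p * M (p k) (p (Suc k))"
  by (simp add: path_weight_def)

lemma path_weight_Cons: "path_weight M (Suc k) (case_nat i p) = M i (p 0) * path_weight M k p"
  unfolding path_weight_def by (subst prod.lessThan_Suc_shift) simp

lemma path_weight_cong: "(\<And>t. t \<le> k \<Longrightarrow> p t = q t) \<Longrightarrow> path_weight M k p = path_weight M k q"
  unfolding path_weight_def by (intro prod.cong) auto

lemma mpow_le_iff:
  fixes M :: "'n::finite \<Rightarrow> 'n \<Rightarrow> 'a::lin_idem_semifield"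
  shows "mpow M k i j \<le> c \<longleftrightarrow> (\<forall>p. p 0 = i \<longrightarrow> p k = j \<longrightarrow> path_weight M k p \<le> c)"
proof (induction k arbitrary: j c)
  case 0
  have "\<exists>p. p 0 = i" by (rule exI [of _ "\<lambda>_. i"]) simp
  thus ?case by (auto simp: idm_def path_weight_def)
next
  case (Suc k)
  have step: "mpow M k i l * M l j \<le> c \<longleftrightarrow>
      (\<forall>p. p 0 = i \<longrightarrow> p k = l \<longrightarrow> path_weight M k p * M l j \<le> c)" for l
  proof (cases "M l j = 0")
    case False
    thus ?thesis
      using Suc.IH [of l "inverse (M l j) * c"] by (simp add: le_inverse_mult_iff mult.commute [of _ "M l j"])
  qed simp
  have "mpow M (Suc k) i j \<le> c \<longleftrightarrow>
      (\<forall>l p. p 0 = i \<longrightarrow> p k = l \<longrightarrow> path_weight M k p * M l j \<le> c)"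
    by (simp add: mmult_def sum_le_iff step)
  also have "\<dots> \<longleftrightarrow> (\<forall>p. p 0 = i \<longrightarrow> p (Suc k) = j \<longrightarrow> path_weight M (Suc k) p \<le> c)"
  proof (intro iffI allI impI)
    fix p :: "nat \<Rightarrow> 'n" assume "p 0 = i" "p (Suc k) = j"
      and "\<forall>l p. p 0 = i \<longrightarrow> p k = l \<longrightarrow> path_weight M k p * M l j \<le> c"
    thus "path_weight M (Suc k) p \<le> c" by (auto simp: path_weight_Suc)
  next
    fix l and p :: "nat \<Rightarrow> 'n" assume "p 0 = i" "p k = l"
      and all: "\<forall>p. p 0 = i \<longrightarrow> p (Suc k) = j \<longrightarrow> path_weight M (Suc k) p \<le> c"
    have "path_weight M k (p(Suc k := j)) = path_weight M k p" by (rule path_weight_cong) simp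
    thus "path_weight M k p * M l j \<le> c"
      using all [rule_format, of "p(Suc k := j)"] \<open>p 0 = i\<close> \<open>p k = l\<close> by (simp add: path_weight_Suc)
  qed
  finally show ?case .
qed

lemma path_weight_le_mpow:
  fixes M :: "'n::finite \<Rightarrow> 'n \<Rightarrow> 'a::lin_idem_semifield"
  shows "path_weight M k p \<le> mpow M k (p 0) (p k)"
  using mpow_le_iff [of M k "p 0" "p k" "mpow M k (p 0) (p k)"] by simp

lemma mult_mpow_le_mpow_Suc:
  fixes M :: "'n::finite \<Rightarrow> 'n \<Rightarrow> 'a::lin_idem_semifield"
  shows "M i l * mpow M k l j \<le> mpow M (Suc k) i j"
proof (cases "M i l = 0")
  case False
  have "path_weight M k p \<le> inverse (M i l) * mpow M (Suc k) i j" if "p 0 = l" "p k = j" for p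
    using path_weight_le_mpow [of M "Suc k" "case_nat i p"] that False
    by (simp add: path_weight_Cons le_inverse_mult_iff)
  hence "mpow M k l j \<le> inverse (M i l) * mpow M (Suc k) i j" by (simp add: mpow_le_iff)
  thus ?thesis using False by (simp add: le_inverse_mult_iff)
qed simp

lemma mpow_le_mstar:
  fixes M :: "'n::finite \<Rightarrow> 'n \<Rightarrow> 'a::lin_idem_semifield"
  shows "k < card (UNIV :: 'n set) \<Longrightarrow> mpow M k i j \<le> mstar M i j"
  unfolding mstar_def by (rule member_le_sum) auto

lemma cyc_weight_closed_walk:
  fixes M :: "'n \<Rightarrow> 'n \<Rightarrow> 'a::lin_idem_semifield"
  assumes "a < b" and "p a = p b"
  shows "cyc_weight M (map (\<lambda>t. p (a + t)) [0..<b - a]) = (\<Prod>t\<in>{a..<b}. M (p t) (p (Suc t)))"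
proof -
  define L where "L = b - a"
  have "p (a + Suc t mod L) = p (a + Suc t)" if "t < L" for t
    using that assms by (cases "Suc t = L") (auto simp: L_def)
  hence "cyc_weight M (map (\<lambda>t. p (a + t)) [0..<L]) = (\<Prod>t<L. M (p (a + t)) (p (a + Suc t)))"
    unfolding cyc_weight_def by (intro prod.cong) auto
  also have "\<dots> = (\<Prod>t\<in>{0..<L}. M (p (t + a)) (p (Suc (t + a))))"
    by (simp add: lessThan_atLeast0 add.commute)
  also have "\<dots> = (\<Prod>t\<in>{0 + a..<L + a}. M (p t) (p (Suc t)))"
    by (rule prod.shift_bounds_nat_ivl [symmetric])
  finally show ?thesis using assms by (simp add: L_def)
qed

lemma path_weight_remove_cycle:
  fixes M :: "'n \<Rightarrow> 'n \<Rightarrow> 'a::lin_idem_semifield"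
  assumes "a < b" "b \<le> k" "p a = p b"
  shows "path_weight M k p =
    path_weight M (k - (b - a)) (\<lambda>t. if t \<le> a then p t else p (t + (b - a))) *
    cyc_weight M (map (\<lambda>t. p (a + t)) [0..<b - a])"
proof -
  define q where "q = (\<lambda>t. if t \<le> a then p t else p (t + (b - a)))"
  define f where "f t = M (p t) (p (Suc t))" for t
  have "path_weight M (k - (b - a)) q =
      (\<Prod>t\<in>{0..<a}. M (q t) (q (Suc t))) * (\<Prod>t\<in>{a..<k - (b - a)}. M (q t) (q (Suc t)))"
    unfolding path_weight_def using assms
    by (simp add: prod.atLeastLessThan_concat lessThan_atLeast0)
  also have "(\<Prod>t\<in>{0..<a}. M (q t) (q (Suc t))) = (\<Prod>t\<in>{0..<a}. f t)"
    by (intro prod.cong) (auto simp: q_def f_def)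
  also have "(\<Prod>t\<in>{a..<k - (b - a)}. M (q t) (q (Suc t))) = (\<Prod>t\<in>{a..<k - (b - a)}. f (t + (b - a)))"
    using assms by (intro prod.cong) (auto simp: q_def f_def)
  also have "\<dots> = (\<Prod>t\<in>{b..<k}. f t)"
    using assms prod.shift_bounds_nat_ivl [of f a "b - a" "k - (b - a)"] by simp
  finally have "path_weight M (k - (b - a)) q * (\<Prod>t\<in>{a..<b}. f t) =
      (\<Prod>t\<in>{0..<a}. f t) * (\<Prod>t\<in>{a..<b}. f t) * (\<Prod>t\<in>{b..<k}. f t)"
    by (simp add: ac_simps)
  also have "\<dots> = path_weight M k p"
    unfolding path_weight_def f_def using assms
    by (simp add: prod.atLeastLessThan_concat lessThan_atLeast0)
  finally show ?thesis
    using cyc_weight_closed_walk [OF assms(1,3), of M] by (simp add: f_def q_def)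
qed

lemma path_weight_le_mstar:
  fixes M :: "'n::finite \<Rightarrow> 'n \<Rightarrow> 'a::lin_idem_semifield"
  assumes "sprad M \<le> 1"
  shows "path_weight M k p \<le> mstar M (p 0) (p k)"
proof (induction k arbitrary: p rule: less_induct)
  case (less k)
  let ?n = "card (UNIV :: 'n set)"
  show ?case
  proof (cases "k < ?n")
    case True
    thus ?thesis using path_weight_le_mpow mpow_le_mstar order_trans by blast
  next
    case False
    txt \<open>Pigeonhole: the walk revisits a vertex among its first \<open>n + 1\<close> positions, and cutting
      out the closed subwalk in between does not increase the weight.\<close>
    have "\<not> inj_on p {0..?n}"
      using card_inj_on_le [of p "{0..?n}" UNIV] by auto
    then obtain a b where ab: "a < b" "b \<le> ?n" "p a = p b"
      unfolding inj_on_def by (metis atLeastAtMost_iff linorder_neqE_nat)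
    define q where "q = (\<lambda>t. if t \<le> a then p t else p (t + (b - a)))"
    let ?cycle = "map (\<lambda>t. p (a + t)) [0..<b - a]"
    have "cyc_weight M ?cycle \<le> sprad M ^ length ?cycle"
      using ab by (intro cyc_weight_le_sprad_power) auto
    also have "\<dots> \<le> 1" using assms power_mono [of "sprad M" 1] by fastforce
    finally have cycle: "cyc_weight M ?cycle \<le> 1" .
    have "path_weight M k p = path_weight M (k - (b - a)) q * cyc_weight M ?cycle"
      using path_weight_remove_cycle [of a b k p M] ab False by (simp add: q_def)
    also have "\<dots> \<le> path_weight M (k - (b - a)) q * 1"
      using cycle by (rule mult_left_mono) simp
    also have "\<dots> \<le> mstar M (q 0) (q (k - (b - a)))"
      using ab False less.IH [of "k - (b - a)" q] by simp
    finally have "path_weight M k p \<le> mstar M (q 0) (q (k - (b - a)))" .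
    moreover have "k - (b - a) \<le> a \<Longrightarrow> k = b" using ab False by linarith
    ultimately show ?thesis using ab False by (auto simp: q_def split: if_splits)
  qed
qed

lemma mpow_le_mstar_of_sprad_le_1:
  fixes M :: "'n::finite \<Rightarrow> 'n \<Rightarrow> 'a::lin_idem_semifield"
  shows "sprad M \<le> 1 \<Longrightarrow> mpow M k i j \<le> mstar M i j"
  using path_weight_le_mstar by (fastforce simp: mpow_le_iff)

lemma mult_mstar_le_mstar:
  fixes M :: "'n::finite \<Rightarrow> 'n \<Rightarrow> 'a::lin_idem_semifield"
  assumes "sprad M \<le> 1"
  shows "M i l * mstar M l j \<le> mstar M i j"
  using order_trans [OF mult_mpow_le_mpow_Suc mpow_le_mstar_of_sprad_le_1 [OF assms]]
  by (simp add: mstar_def sum_distrib_left sum_le_iff)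

lemma one_le_mstar_diag:
  fixes M :: "'n::finite \<Rightarrow> 'n \<Rightarrow> 'a::lin_idem_semifield"
  shows "1 \<le> mstar M i i"
  using mpow_le_mstar [of 0 M i i] by (simp add: idm_def finite_UNIV_card_ge_0)

lemma le_mvmult_mstar:
  fixes M :: "'n::finite \<Rightarrow> 'n \<Rightarrow> 'a::lin_idem_semifield"
  shows "u i \<le> mvmult (mstar M) u i"
proof -
  have "1 * u i \<le> mstar M i i * u i" by (intro mult_right_mono one_le_mstar_diag) simp
  also have "\<dots> \<le> mvmult (mstar M) u i"
    unfolding mvmult_def by (rule member_le_sum [where f = "\<lambda>j. mstar M i j * u j"]) auto
  finally show ?thesis by simp
qed

section \<open>Subeigenvectors\<close>

definition subeigenvector :: "('n \<Rightarrow> 'n \<Rightarrow> 'a::lin_idem_semifield) \<Rightarrow> ('n \<Rightarrow> 'a) \<Rightarrow> bool" where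
  "subeigenvector M x \<longleftrightarrow> (\<forall>r s. M r s * x s \<le> x r)"

lemma subeigenvector_mvmult_mstar:
  fixes M :: "'n::finite \<Rightarrow> 'n \<Rightarrow> 'a::lin_idem_semifield"
  assumes "sprad M \<le> 1"
  shows "subeigenvector M (mvmult (mstar M) u)"
  unfolding subeigenvector_def
proof (intro allI)
  fix r s
  have "M r s * (mstar M s j * u j) \<le> mstar M r j * u j" for j
    using mult_right_mono [OF mult_mstar_le_mstar [OF assms, of r s j], of "u j"]
    by (simp add: mult.assoc)
  also have "mstar M r j * u j \<le> mvmult (mstar M) u r" for j
    unfolding mvmult_def by (rule member_le_sum [where f = "\<lambda>j. mstar M r j * u j"]) auto
  finally show "M r s * mvmult (mstar M) u s \<le> mvmult (mstar M) u r"
    by (simp add: mvmult_def sum_distrib_left sum_le_iff)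
qed

lemma path_weight_subeigenvector:
  fixes M :: "'n \<Rightarrow> 'n \<Rightarrow> 'a::lin_idem_semifield"
  assumes "subeigenvector M x"
  shows "path_weight M k p * x (p k) \<le> x (p 0)"
proof (induction k)
  case (Suc k)
  have "path_weight M (Suc k) p * x (p (Suc k)) = path_weight M k p * (M (p k) (p (Suc k)) * x (p (Suc k)))"
    by (simp add: path_weight_Suc mult.assoc)
  also have "\<dots> \<le> path_weight M k p * x (p k)"
    using assms by (intro mult_left_mono) (simp_all add: subeigenvector_def)
  also have "\<dots> \<le> x (p 0)" by (rule Suc.IH)
  finally show ?case .
qed (simp add: path_weight_def)

lemma mstar_fixes_subeigenvector:
  fixes M :: "'n::finite \<Rightarrow> 'n \<Rightarrow> 'a::lin_idem_semifield"
  assumes "subeigenvector M x"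
  shows "mvmult (mstar M) x = x"
proof
  fix i
  have "mpow M k i j * x j \<le> x i" for k j
  proof (cases "x j = 0")
    case False
    have "path_weight M k p \<le> inverse (x j) * x i" if "p 0 = i" "p k = j" for p
      using path_weight_subeigenvector [OF assms, where k = k and p = p] that False
      by (simp add: le_inverse_mult_iff mult.commute [of "x j"])
    hence "mpow M k i j \<le> inverse (x j) * x i" by (simp add: mpow_le_iff)
    thus ?thesis using False by (simp add: le_inverse_mult_iff mult.commute [of "x j"])
  qed simp
  hence "mvmult (mstar M) x i \<le> x i"
    by (simp add: mvmult_def mstar_def sum_distrib_right sum_le_iff)
  thus "mvmult (mstar M) x i = x i" using le_mvmult_mstar by (metis order.antisym)
qed

lemma regular_subeigenvectors_eq_mstar_image:
  fixes M :: "'n::finite \<Rightarrow> 'n \<Rightarrow> 'a::lin_idem_semifield"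
  assumes "sprad M \<le> 1" and M_nonzero: "\<And>r s. M r s \<noteq> 0"
  shows "{x. regular x \<and> subeigenvector M x} = {mvmult (mstar M) u | u. u \<noteq> (\<lambda>_. 0)}"
proof (intro set_eqI iffI)
  fix x assume "x \<in> {x. regular x \<and> subeigenvector M x}"
  hence "mvmult (mstar M) x = x" "x \<noteq> (\<lambda>_. 0)"
    using mstar_fixes_subeigenvector [of M x] by (auto simp: regular_def)
  thus "x \<in> {mvmult (mstar M) u | u. u \<noteq> (\<lambda>_. 0)}" by force
next
  fix x assume "x \<in> {mvmult (mstar M) u | u. u \<noteq> (\<lambda>_. 0)}"
  then obtain u where x: "x = mvmult (mstar M) u" and "u \<noteq> (\<lambda>_. 0)" by blast
  then obtain j where "u j \<noteq> 0" by auto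
  have subeigen: "subeigenvector M x"
    unfolding x by (rule subeigenvector_mvmult_mstar [OF assms(1)])
  have "x j \<noteq> 0" using le_mvmult_mstar [of u j M] \<open>u j \<noteq> 0\<close> x by (auto simp: order.antisym)
  hence "M r j * x j \<noteq> 0" for r using M_nonzero by simp
  hence "regular x" using subeigen by (metis subeigenvector_def regular_def zero_le order.antisym)
  thus "x \<in> {x. regular x \<and> subeigenvector M x}" using subeigen by blast
qed

section \<open>The objective function\<close>

definition quad_form :: "('n::finite \<Rightarrow> 'n \<Rightarrow> 'a::lin_idem_semifield) \<Rightarrow> ('n \<Rightarrow> 'a) \<Rightarrow> 'a" where
  "quad_form B x = (\<Sum>r\<in>UNIV. \<Sum>s\<in>UNIV. inverse (x r) * B r s * x s)"

lemma pinv_mat_outer: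
  fixes x :: "'n \<Rightarrow> 'a::lin_idem_semifield"
  assumes "regular x"
  shows "pinv_mat (outer x) r s = inverse (x s) * x r"
proof -
  have "x r \<noteq> 0" "x s \<noteq> 0" using assms by (auto simp: regular_def)
  moreover have "x s * inverse (x r) * (inverse (x s) * x r) = (x s * inverse (x s)) * (x r * inverse (x r))"
    by (simp add: ac_simps)
  ultimately have "x s * inverse (x r) * (inverse (x s) * x r) = 1"
    by (simp add: right_inverse)
  thus ?thesis using \<open>x r \<noteq> 0\<close> \<open>x s \<noteq> 0\<close>
    by (auto simp: pinv_mat_def outer_def pinv_vec_def inverse_nonzero inverse_eqI)
qed

lemma mdist_outer_eq_quad_form:
  fixes x :: "'n::finite \<Rightarrow> 'a::lin_idem_semifield"
  assumes "regular x"
  shows "mdist A (outer x) = quad_form (\<lambda>r s. A r s + pinv_mat A r s) x"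
proof -
  have "mtrace (mmult (pinv_mat (outer x)) A) = (\<Sum>s\<in>UNIV. \<Sum>r\<in>UNIV. inverse (x r) * A r s * x s)"
    unfolding mtrace_def mmult_def by (simp add: pinv_mat_outer [OF assms] ac_simps)
  also have "\<dots> = (\<Sum>r\<in>UNIV. \<Sum>s\<in>UNIV. inverse (x r) * A r s * x s)"
    by (rule sum.swap)
  moreover have "mtrace (mmult (pinv_mat A) (outer x)) =
      (\<Sum>r\<in>UNIV. \<Sum>s\<in>UNIV. inverse (x r) * pinv_mat A r s * x s)"
    using assms unfolding mtrace_def mmult_def outer_def pinv_vec_def regular_def
    by (simp add: ac_simps)
  ultimately show ?thesis
    unfolding mdist_def quad_form_def by (simp add: sum.distrib [symmetric] distrib_left distrib_right)
qed

lemma quad_form_sum: "quad_form (\<lambda>r s. \<Sum>i\<in>I. M i r s) x = (\<Sum>i\<in>I. quad_form (M i) x)"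
proof -
  have "quad_form (\<lambda>r s. \<Sum>i\<in>I. M i r s) x = (\<Sum>r\<in>UNIV. \<Sum>s\<in>UNIV. \<Sum>i\<in>I. inverse (x r) * M i r s * x s)"
    unfolding quad_form_def by (simp add: sum_distrib_left sum_distrib_right)
  also have "\<dots> = (\<Sum>i\<in>I. quad_form (M i) x)"
    unfolding quad_form_def by (simp add: sum.swap [where A = I])
  finally show ?thesis .
qed

lemma objective_eq_quad_form:
  fixes A :: "'i \<Rightarrow> 'n::finite \<Rightarrow> 'n \<Rightarrow> 'a::lin_idem_semifield"
  assumes "regular x"
  shows "(\<Sum>i\<in>I. mdist (A i) (outer x)) = quad_form (\<lambda>r s. \<Sum>i\<in>I. A i r s + pinv_mat (A i) r s) x"
  using assms by (simp add: quad_form_sum mdist_outer_eq_quad_form)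

lemma quad_form_le_iff:
  fixes B :: "'n::finite \<Rightarrow> 'n \<Rightarrow> 'a::lin_idem_semifield"
  assumes "regular x" and "c \<noteq> 0"
  shows "quad_form B x \<le> c \<longleftrightarrow> subeigenvector (smult (inverse c) B) x"
proof -
  have "inverse (x r) * B r s * x s \<le> c \<longleftrightarrow> inverse c * (B r s * x s) \<le> x r" for r s
  proof -
    have "x r \<noteq> 0" using assms(1) by (simp add: regular_def)
    hence "inverse (x r) * B r s * x s \<le> c \<longleftrightarrow> B r s * x s \<le> x r * c"
      unfolding mult.assoc by (rule inverse_mult_le_iff)
    also have "\<dots> \<longleftrightarrow> inverse c * (B r s * x s) \<le> x r"
      unfolding inverse_mult_le_iff [OF assms(2)] by (simp only: mult.commute)
    finally show ?thesis .
  qed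
  thus ?thesis by (simp add: quad_form_def subeigenvector_def sum_le_iff smult_def mult.assoc)
qed

lemma prod_lessThan_rotate:
  fixes h :: "nat \<Rightarrow> 'a::comm_monoid_mult"
  shows "(\<Prod>t<k. h ((t + 1) mod k)) = (\<Prod>t<k. h t)"
proof (cases k)
  case (Suc n)
  have "(\<Prod>t<Suc n. h (Suc t mod Suc n)) = (\<Prod>t<n. h (Suc t)) * h 0"
    by (simp add: prod.lessThan_Suc)
  also have "\<dots> = (\<Prod>t<Suc n. h t)" by (simp only: prod.lessThan_Suc_shift mult.commute)
  finally show ?thesis using Suc by simp
qed simp

lemma cyc_weight_rescale:
  fixes M :: "'n \<Rightarrow> 'n \<Rightarrow> 'a::lin_idem_semifield"
  assumes "regular x"
  shows "cyc_weight (\<lambda>r s. inverse (x r) * M r s * x s) is = cyc_weight M is"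
proof -
  let ?k = "length is" and ?v = "\<lambda>t. is ! t" and ?w = "\<lambda>t. is ! ((t + 1) mod length is)"
  have "cyc_weight (\<lambda>r s. inverse (x r) * M r s * x s) is =
      (\<Prod>t<?k. inverse (x (?v t))) * cyc_weight M is * (\<Prod>t<?k. x (?w t))"
    unfolding cyc_weight_def by (simp only: prod.distrib)
  also have "(\<Prod>t<?k. x (?w t)) = (\<Prod>t<?k. x (?v t))"
    by (rule prod_lessThan_rotate)
  also have "(\<Prod>t<?k. inverse (x (?v t))) * cyc_weight M is * (\<Prod>t<?k. x (?v t)) =
      (\<Prod>t<?k. inverse (x (?v t)) * x (?v t)) * cyc_weight M is"
    by (simp only: prod.distrib ac_simps)
  also have "\<dots> = cyc_weight M is"
    using assms by (simp add: regular_def inverse_mult_self)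
  finally show ?thesis .
qed

lemma prod_le_power_card:
  fixes f :: "'b \<Rightarrow> 'a::lin_idem_semifield"
  shows "finite A \<Longrightarrow> (\<And>t. t \<in> A \<Longrightarrow> f t \<le> c) \<Longrightarrow> prod f A \<le> c ^ card A"
  by (induction A rule: finite_induct) (auto intro: mult_mono)

lemma sprad_le_quad_form:
  fixes B :: "'n::finite \<Rightarrow> 'n \<Rightarrow> 'a::lin_idem_semifield"
  assumes "regular x"
  shows "sprad B \<le> quad_form B x"
proof -
  have entry: "inverse (x r) * B r s * x s \<le> quad_form B x" for r s
  proof -
    have "inverse (x r) * B r s * x s \<le> (\<Sum>s\<in>UNIV. inverse (x r) * B r s * x s)"
      by (rule member_le_sum) auto
    also have "\<dots> \<le> quad_form B x"
      unfolding quad_form_def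
      by (rule member_le_sum [where f = "\<lambda>r. \<Sum>s\<in>UNIV. inverse (x r) * B r s * x s"]) auto
    finally show ?thesis .
  qed
  have "cyc_weight B is \<le> quad_form B x ^ length is" for "is"
  proof -
    have "cyc_weight B is = cyc_weight (\<lambda>r s. inverse (x r) * B r s * x s) is"
      by (rule cyc_weight_rescale [OF assms, symmetric])
    also have "\<dots> \<le> quad_form B x ^ card {..<length is}"
      unfolding cyc_weight_def by (rule prod_le_power_card) (simp_all add: entry)
    finally show ?thesis by simp
  qed
  thus ?thesis by (simp add: sprad_le_iff)
qed

lemma quad_form_eq_sprad_iff:
  fixes B :: "'n::finite \<Rightarrow> 'n \<Rightarrow> 'a::lin_idem_semifield"
  assumes "regular x" and "sprad B \<noteq> 0"
  shows "quad_form B x = sprad B \<longleftrightarrow> subeigenvector (smult (inverse (sprad B)) B) x"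
proof -
  have "quad_form B x = sprad B \<longleftrightarrow> quad_form B x \<le> sprad B"
    using sprad_le_quad_form [OF assms(1), of B] by (auto intro: order.antisym)
  thus ?thesis by (simp only: quad_form_le_iff [OF assms])
qed

theorem theorem2:
  fixes A :: "nat \<Rightarrow> ('n::finite \<Rightarrow> 'n \<Rightarrow> 'a::lin_idem_semifield)"
    and m :: nat and B :: "'n \<Rightarrow> 'n \<Rightarrow> 'a" and \<mu> :: 'a
  assumes B_def: "B = (\<lambda>r s. \<Sum>i\<in>{1..m}. A i r s + pinv_mat (A i) r s)"
    and B_nz: "\<forall>r s. B r s \<noteq> 0"
    and mu_def: "\<mu> = sprad B"
  shows "(\<forall>x. regular x \<longrightarrow> \<mu> \<le> (\<Sum>i\<in>{1..m}. mdist (A i) (outer x)))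
       \<and> (\<exists>x. regular x \<and> (\<Sum>i\<in>{1..m}. mdist (A i) (outer x)) = \<mu>)
       \<and> {x. regular x \<and> (\<Sum>i\<in>{1..m}. mdist (A i) (outer x)) = \<mu>}
         = {mvmult (mstar (smult (inverse \<mu>) B)) u | u. u \<noteq> (\<lambda>_. 0)}"
proof -
  let ?f = "\<lambda>x. \<Sum>i\<in>{1..m}. mdist (A i) (outer x)"
  define M where "M = smult (inverse \<mu>) B"
  have "\<mu> \<noteq> 0" unfolding mu_def using B_nz sprad_nonzero by blast
  have objective: "?f x = quad_form B x" if "regular x" for x
    unfolding B_def by (rule objective_eq_quad_form [OF that])
  have lower: "\<mu> \<le> ?f x" if "regular x" for x
    unfolding objective [OF that] mu_def by (rule sprad_le_quad_form [OF that])
  have "{x. regular x \<and> ?f x = \<mu>} = {x. regular x \<and> subeigenvector M x}"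
    using objective quad_form_eq_sprad_iff [of _ B] \<open>\<mu> \<noteq> 0\<close> by (auto simp: M_def mu_def)
  also have "\<dots> = {mvmult (mstar M) u | u. u \<noteq> (\<lambda>_. 0)}"
    using sprad_normalize [of B] B_nz inverse_nonzero [OF \<open>\<mu> \<noteq> 0\<close>] \<open>\<mu> \<noteq> 0\<close>
    by (intro regular_subeigenvectors_eq_mstar_image) (simp_all add: M_def smult_def flip: mu_def)
  finally have solutions: "{x. regular x \<and> ?f x = \<mu>} = {mvmult (mstar M) u | u. u \<noteq> (\<lambda>_. 0)}" .
  moreover have "(\<lambda>_. 1) \<noteq> (\<lambda>_::'n. 0::'a)" by (metis zero_neq_one)
  ultimately have "\<exists>x. regular x \<and> ?f x = \<mu>" by blast
  thus ?thesis using lower solutions by (simp add: M_def)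
qed

end
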